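(* Let $(\Omega,\mathcal{F},\mathbb{P})$ be a nonatomic probability space, let $\gamma>0$, let $u(x)=1-e^{-\gamma x}$ for $x\in\mathbb{R}$, let $\alpha<1$, and set $\mathcal{A}_u^\infty=\{X\in L^\infty:\mathbb{E}[u(X)]\ge\alpha\}$. Let $S=(S_0,S_T)$ be a traded asset with $S_T\in L^\infty$ and assume $\rho_{\mathcal{A}_u^\infty,S}$ is finite-valued on $L^\infty$. Then $\mathrm{Index}_{\mathrm{fin}}(\rho_{\mathcal{A}_u^\infty,S})=\infty$.
   Context: A traded asset is $S=(S_0,S_T)$ with $S_0>0$, $S_T\ge0$ a.s., $S_T\ne0$. For $\mathcal{B}\subset L^\infty$, $\rho_{\mathcal{B},S}(X)=\inf\{m\in\mathbb{R}:X+\frac{m}{S_0}S_T\in\mathcal{B}\}$. For a convex, law-invariant acceptance set $\mathcal{A}\subset L^\infty$ with $\rho_{\mathcal{A},S}$ finite-valued on $L^\infty$, $\mathrm{Index}_{\mathrm{fin}}(\rho_{\mathcal{A},S})=\inf\{p\in[1,\infty):\text{the closure of }\mathcal{A}\text{ in }L^p\text{ has nonempty interior in }L^p\}$, with $\inf\emptyset=\infty$. *)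

theory Defs
  imports "HOL-Probability.Probability"
begin

text \<open>Random variables are real functions on the sample space of the measure M;
  L-spaces are handled via representatives (all notions below are invariant
  under almost-everywhere equality).\<close>

definition nonatomic :: "'a measure \<Rightarrow> bool" where
  "nonatomic M \<longleftrightarrow> (\<forall>A\<in>sets M. measure M A > 0 \<longrightarrow>
      (\<exists>B\<in>sets M. B \<subseteq> A \<and> 0 < measure M B \<and> measure M B < measure M A))"

definition Linf :: "'a measure \<Rightarrow> ('a \<Rightarrow> real) set" where
  "Linf M = {X. X \<in> borel_measurable M \<and> (\<exists>C. AE x in M. \<bar>X x\<bar> \<le> C)}"

definition Lp :: "'a measure \<Rightarrow> real \<Rightarrow> ('a \<Rightarrow> real) set" where
  "Lp M p = {X. X \<in> borel_measurable M \<and> integrable M (\<lambda>x. \<bar>X x\<bar> powr p)}"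

definition Lp_dist :: "'a measure \<Rightarrow> real \<Rightarrow> ('a \<Rightarrow> real) \<Rightarrow> ('a \<Rightarrow> real) \<Rightarrow> real" where
  "Lp_dist M p X Y = (\<integral>x. \<bar>X x - Y x\<bar> powr p \<partial>M) powr (1 / p)"

definition Lp_closure :: "'a measure \<Rightarrow> real \<Rightarrow> ('a \<Rightarrow> real) set \<Rightarrow> ('a \<Rightarrow> real) set" where
  "Lp_closure M p B = {X \<in> Lp M p. \<forall>e>0. \<exists>Y\<in>B. Lp_dist M p X Y < e}"

definition Lp_nonempty_interior :: "'a measure \<Rightarrow> real \<Rightarrow> ('a \<Rightarrow> real) set \<Rightarrow> bool" where
  "Lp_nonempty_interior M p C \<longleftrightarrow>
     (\<exists>X\<in>Lp M p. \<exists>e>0. \<forall>Y\<in>Lp M p. Lp_dist M p X Y < e \<longrightarrow> Y \<in> C)"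

text \<open>Index_fin, with inf of the empty set equal to infinity.\<close>
definition index_fin :: "'a measure \<Rightarrow> ('a \<Rightarrow> real) set \<Rightarrow> ereal" where
  "index_fin M A = Inf (ereal ` {p. 1 \<le> p \<and> Lp_nonempty_interior M p (Lp_closure M p A)})"

definition traded_asset :: "'a measure \<Rightarrow> real \<Rightarrow> ('a \<Rightarrow> real) \<Rightarrow> bool" where
  "traded_asset M S0 ST \<longleftrightarrow> S0 > 0 \<and> ST \<in> borel_measurable M \<and>
     (AE x in M. ST x \<ge> 0) \<and> \<not> (AE x in M. ST x = 0)"

definition rho :: "('a \<Rightarrow> real) set \<Rightarrow> real \<Rightarrow> ('a \<Rightarrow> real) \<Rightarrow> ('a \<Rightarrow> real) \<Rightarrow> real" where
  "rho B S0 ST X = Inf {m. (\<lambda>w. X w + m / S0 * ST w) \<in> B}"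

definition rho_finite :: "'a measure \<Rightarrow> ('a \<Rightarrow> real) set \<Rightarrow> real \<Rightarrow> ('a \<Rightarrow> real) \<Rightarrow> bool" where
  "rho_finite M B S0 ST \<longleftrightarrow> (\<forall>X\<in>Linf M.
     {m. (\<lambda>w. X w + m / S0 * ST w) \<in> B} \<noteq> {} \<and> bdd_below {m. (\<lambda>w. X w + m / S0 * ST w) \<in> B})"

definition exp_util_accept :: "'a measure \<Rightarrow> real \<Rightarrow> real \<Rightarrow> ('a \<Rightarrow> real) set" where
  "exp_util_accept M \<gamma> \<alpha> = {X \<in> Linf M. (\<integral>x. 1 - exp (- \<gamma> * X x) \<partial>M) \<ge> \<alpha>}"

end

theory Submission
  imports Defs "HOL-Real_Asymp.Real_Asymp"
begin

text \<open>Every open L^p ball around some X0 contains Y = X0 - c 1_B, where X0 is bounded above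
  by R on B and B has tiny probability q. Any acceptable X that is L^p-close to Y must stay close
  to Y on most of B, so there X is at most R - c/2; then E[exp(-\<gamma> X)] is at least of order
  q exp(\<gamma> c/2). Taking c of order q^(-1/p) keeps Y in the ball, and as q \<rightarrow> 0 the
  quantity q exp(\<gamma> c/2) blows up, contradicting E[exp(-\<gamma> X)] \<le> 1 - \<alpha>.
  So no L^p closure of the acceptance set has interior.\<close>

lemma abs_diff_powr_le:
  fixes a b p :: real assumes "p > 0"
  shows "\<bar>a - b\<bar> powr p \<le> 2 powr p * (\<bar>a\<bar> powr p + \<bar>b\<bar> powr p)"
proof -
  have "\<bar>a - b\<bar> powr p \<le> (2 * max \<bar>a\<bar> \<bar>b\<bar>) powr p"
    by (intro powr_mono2) (use assms in auto)
  also have "\<dots> = 2 powr p * max \<bar>a\<bar> \<bar>b\<bar> powr p"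
    by (simp add: powr_mult)
  also have "max \<bar>a\<bar> \<bar>b\<bar> powr p \<le> \<bar>a\<bar> powr p + \<bar>b\<bar> powr p"
    by (cases "\<bar>a\<bar> \<le> \<bar>b\<bar>") (auto simp: max_def)
  finally show ?thesis by simp
qed

lemma integrable_Lp_diff:
  assumes "p > 0" "X \<in> Lp M p" "Y \<in> Lp M p"
  shows "integrable M (\<lambda>x. \<bar>X x - Y x\<bar> powr p)"
proof -
  have [measurable]: "X \<in> borel_measurable M" "Y \<in> borel_measurable M"
    using assms by (auto simp: Lp_def)
  have "integrable M (\<lambda>x. 2 powr p * (\<bar>X x\<bar> powr p + \<bar>Y x\<bar> powr p))"
    using assms by (auto simp: Lp_def)
  then show ?thesis
    by (rule Bochner_Integration.integrable_bound)
      (use abs_diff_powr_le[OF assms(1)] in auto)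
qed

lemma Lp_diff:
  assumes "p > 0" "X \<in> Lp M p" "Y \<in> Lp M p"
  shows "(\<lambda>x. X x - Y x) \<in> Lp M p"
  using integrable_Lp_diff[OF assms] assms by (auto simp: Lp_def)

lemma (in finite_measure) Linf_subset_Lp:
  assumes "p > 0"
  shows "Linf M \<subseteq> Lp M p"
proof
  fix X assume "X \<in> Linf M"
  then obtain C where X[measurable]: "X \<in> borel_measurable M" and C: "AE x in M. \<bar>X x\<bar> \<le> C"
    by (auto simp: Linf_def)
  have "integrable M (\<lambda>x. \<bar>X x\<bar> powr p)"
  proof (rule Bochner_Integration.integrable_bound)
    show "AE x in M. norm (\<bar>X x\<bar> powr p) \<le> norm (\<bar>C\<bar> powr p)"
      using C by eventually_elim (use assms in \<open>auto intro!: powr_mono2\<close>)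
  qed auto
  then show "X \<in> Lp M p" using X by (auto simp: Lp_def)
qed

lemma (in finite_measure) Lp_dist_ge_on_set:
  assumes "p > 0" "X \<in> Lp M p" "Y \<in> Lp M p" "S \<in> sets M" "d \<ge> 0"
    and "\<And>x. x \<in> S \<Longrightarrow> d \<le> \<bar>X x - Y x\<bar>"
  shows "d * measure M S powr (1/p) \<le> Lp_dist M p X Y"
proof -
  have "(\<integral>x. d powr p * indicator S x \<partial>M) \<le> (\<integral>x. \<bar>X x - Y x\<bar> powr p \<partial>M)"
  proof (rule integral_mono)
    show "integrable M (\<lambda>x. d powr p * indicator S x)"
      using assms(4) by (intro integrable_mult_right integrable_real_indicator)
        (auto simp: emeasure_eq_measure)
    show "d powr p * indicator S x \<le> \<bar>X x - Y x\<bar> powr p" for x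
      using assms(6)[of x] assms(1,5) by (auto simp: indicator_def intro: powr_mono2)
  qed (rule integrable_Lp_diff[OF assms(1-3)])
  then have "(d powr p * measure M S) powr (1/p) \<le> Lp_dist M p X Y"
    unfolding Lp_dist_def using assms(1,4,5) by (intro powr_mono2) auto
  then show ?thesis
    using assms(1,5) by (simp add: powr_mult powr_powr)
qed

lemma (in finite_measure) Lp_dist_minus_indicator:
  assumes "p > 0" "c \<ge> 0" "B \<in> sets M"
  shows "Lp_dist M p X (\<lambda>x. X x - c * indicator B x) = c * measure M B powr (1/p)"
proof -
  have "\<bar>X x - (X x - c * indicator B x)\<bar> powr p = c powr p * indicator B x" for x
    using assms by (simp add: indicator_def)
  then show ?thesis
    unfolding Lp_dist_def using assms by (simp only:) (simp add: emeasure_eq_measure powr_mult powr_powr)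
qed

lemma (in prob_space) nonatomic_small_subset:
  assumes "nonatomic M" "D \<in> sets M" "measure M D > 0" "\<delta> > 0"
  shows "\<exists>B\<in>sets M. B \<subseteq> D \<and> 0 < measure M B \<and> measure M B < \<delta>"
proof -
  have halving: "\<exists>B\<in>sets M. B \<subseteq> D \<and> 0 < measure M B \<and> measure M B \<le> measure M D / 2 ^ n" for n
  proof (induction n)
    case 0 then show ?case using assms by auto
  next
    case (Suc n)
    then obtain B where B: "B \<in> sets M" "B \<subseteq> D" "0 < measure M B" "measure M B \<le> measure M D / 2 ^ n"
      by auto
    then obtain B' where B': "B' \<in> sets M" "B' \<subseteq> B" "0 < measure M B'" "measure M B' < measure M B"
      using assms(1) unfolding nonatomic_def by blast
    have diff: "measure M (B - B') = measure M B - measure M B'"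
      using B B' by (simp add: finite_measure_Diff)
    show ?case
    proof (cases "measure M B' \<le> measure M B / 2")
      case True
      then show ?thesis using B B' by (intro bexI[of _ B']) auto
    next
      case False
      then show ?thesis using B B' diff by (intro bexI[of _ "B - B'"]) auto
    qed
  qed
  obtain n where "measure M D / \<delta> < 2 ^ n"
    using real_arch_pow[of 2 "measure M D / \<delta>"] by auto
  then have "measure M D / 2 ^ n < \<delta>"
    using assms(4) by (simp add: field_simps)
  moreover obtain B where "B \<in> sets M" "B \<subseteq> D" "0 < measure M B" "measure M B \<le> measure M D / 2 ^ n"
    using halving by blast
  ultimately show ?thesis by (intro bexI[of _ B]) auto
qed

lemma (in prob_space) sublevel_set_positive_measure:
  fixes X :: "'a \<Rightarrow> real"
  assumes [measurable]: "X \<in> borel_measurable M"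
  obtains R where "measure M {x\<in>space M. X x \<le> R} > 0"
proof (rule ccontr)
  assume "\<not> thesis"
  then have "measure M {x\<in>space M. X x \<le> real n} = 0" for n
    using that measure_nonneg[of M] by (metis less_eq_real_def)
  then have "AE x in M. \<not> X x \<le> real n" for n
    by (intro AE_iff_measurable[THEN iffD2, OF _ refl]) (auto simp: emeasure_eq_measure)
  then have "AE x in M. \<forall>n. \<not> X x \<le> real n" by (simp add: AE_all_countable)
  then have "AE x in M. False"
    by eventually_elim (use real_nat_ceiling_ge in blast)
  then show False by simp
qed

lemma (in prob_space) exp_util_accept_measure_bound:
  assumes "\<gamma> > 0" "X \<in> exp_util_accept M \<gamma> \<alpha>" "G \<in> sets M" "\<And>x. x \<in> G \<Longrightarrow> X x \<le> r"
  shows "exp (- \<gamma> * r) * measure M G \<le> 1 - \<alpha>"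
proof -
  obtain C where [measurable]: "X \<in> borel_measurable M" and C: "AE x in M. \<bar>X x\<bar> \<le> C"
    and u: "(\<integral>x. 1 - exp (- \<gamma> * X x) \<partial>M) \<ge> \<alpha>"
    using assms(2) by (auto simp: exp_util_accept_def Linf_def)
  have int: "integrable M (\<lambda>x. exp (- \<gamma> * X x))"
  proof (rule Bochner_Integration.integrable_bound[of _ "\<lambda>x. exp (\<gamma> * C)"])
    show "AE x in M. norm (exp (- \<gamma> * X x)) \<le> norm (exp (\<gamma> * C))"
      using C
    proof eventually_elim
      fix x assume "\<bar>X x\<bar> \<le> C"
      then have "\<gamma> * (- X x) \<le> \<gamma> * C" using assms(1) by (intro mult_left_mono) auto
      then show "norm (exp (- \<gamma> * X x)) \<le> norm (exp (\<gamma> * C))" by simp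
    qed
  qed auto
  have "(\<integral>x. exp (- \<gamma> * r) * indicator G x \<partial>M) \<le> (\<integral>x. exp (- \<gamma> * X x) \<partial>M)"
  proof (rule integral_mono[OF _ int])
    show "integrable M (\<lambda>x. exp (- \<gamma> * r) * indicator G x)"
      using assms(3) by (intro integrable_mult_right integrable_real_indicator)
        (auto simp: emeasure_eq_measure)
    show "exp (- \<gamma> * r) * indicator G x \<le> exp (- \<gamma> * X x)" for x
      using assms(1) assms(4)[of x] by (auto simp: indicator_def)
  qed
  also have "\<dots> \<le> 1 - \<alpha>"
    using u int by (simp add: Bochner_Integration.integral_diff prob_space)
  finally show ?thesis using assms(3) by simp
qed

text \<open>If Y dips to r - c on B, then an acceptable X either stays below r - c/2 on half of B,
  which the utility constraint forbids for large enough B, or differs from Y by c/2 on the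
  other half.\<close>

lemma (in prob_space) exp_util_accept_Lp_far_from_dip:
  assumes "\<gamma> > 0" "p > 0" "X \<in> exp_util_accept M \<gamma> \<alpha>" "Y \<in> Lp M p" "B \<in> sets M" "c \<ge> 0"
    and dip: "\<And>x. x \<in> B \<Longrightarrow> Y x \<le> r - c"
    and large: "2 * (1 - \<alpha>) < exp (- \<gamma> * (r - c/2)) * measure M B"
  shows "c/2 * (measure M B / 2) powr (1/p) \<le> Lp_dist M p Y X"
proof -
  define G where "G = B \<inter> {x\<in>space M. X x \<le> r - c/2}"
  define E where "E = exp (- \<gamma> * (r - c/2))"
  have [measurable]: "X \<in> borel_measurable M"
    using assms(3) by (simp add: exp_util_accept_def Linf_def)
  have G: "G \<in> sets M" "G \<subseteq> B" using assms(5) by (auto simp: G_def)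
  have "\<And>x. x \<in> G \<Longrightarrow> X x \<le> r - c/2" by (simp add: G_def)
  from exp_util_accept_measure_bound[OF assms(1,3) G(1) this]
  have "E * measure M G \<le> 1 - \<alpha>" by (simp add: E_def)
  with large have "E * (2 * measure M G) < E * measure M B"
    unfolding E_def[symmetric] by (simp add: algebra_simps)
  then have "measure M G < measure M B / 2" by (simp add: E_def)
  moreover have "measure M (B - G) = measure M B - measure M G"
    using G assms(5) by (simp add: finite_measure_Diff)
  ultimately have half: "measure M B / 2 \<le> measure M (B - G)" by simp
  have far: "c/2 \<le> \<bar>Y x - X x\<bar>" if x: "x \<in> B - G" for x
  proof -
    have "x \<in> space M" using x assms(5) sets.sets_into_space by blast
    then have "r - c/2 < X x" using x by (auto simp: G_def)
    moreover have "Y x \<le> r - c" using x dip by blast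
    ultimately show ?thesis by arith
  qed
  have "X \<in> Lp M p"
    using assms(3) Linf_subset_Lp[OF assms(2)] by (auto simp: exp_util_accept_def)
  moreover have "B - G \<in> sets M" using G assms(5) by blast
  ultimately have "c/2 * measure M (B - G) powr (1/p) \<le> Lp_dist M p Y X"
    using assms(6) by (intro Lp_dist_ge_on_set[OF assms(2,4)] far) auto
  moreover have "c/2 * (measure M B / 2) powr (1/p) \<le> c/2 * measure M (B - G) powr (1/p)"
    using half assms(2,6) by (intro mult_left_mono powr_mono2) auto
  ultimately show ?thesis by (meson order_trans)
qed

lemma (in prob_space) dip_notin_Lp_closure_exp_util_accept:
  assumes "\<gamma> > 0" "p > 0" "Y \<in> Lp M p" "B \<in> sets M" "c > 0" "measure M B > 0"
    and "\<And>x. x \<in> B \<Longrightarrow> Y x \<le> r - c"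
    and "2 * (1 - \<alpha>) < exp (- \<gamma> * (r - c/2)) * measure M B"
  shows "Y \<notin> Lp_closure M p (exp_util_accept M \<gamma> \<alpha>)"
proof
  assume "Y \<in> Lp_closure M p (exp_util_accept M \<gamma> \<alpha>)"
  moreover have "c/2 * (measure M B / 2) powr (1/p) > 0" using assms(5,6) by simp
  ultimately obtain X where X: "X \<in> exp_util_accept M \<gamma> \<alpha>"
    and "Lp_dist M p Y X < c/2 * (measure M B / 2) powr (1/p)"
    unfolding Lp_closure_def by blast
  moreover have "c/2 * (measure M B / 2) powr (1/p) \<le> Lp_dist M p Y X"
    using assms(5,7,8) by (intro exp_util_accept_Lp_far_from_dip[OF assms(1,2) X assms(3,4)]) auto
  ultimately show False by simp
qed

lemma eventually_less_mult_exp_div_root: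
  fixes a p L :: real assumes "a > 0" "p > 0"
  shows "eventually (\<lambda>q. L < q * exp (a / q powr (1/p))) (at_right 0)"
proof -
  have "filterlim (\<lambda>q. q * exp (a / q powr (1/p))) at_top (at_right 0)"
    using assms by real_asymp
  then show ?thesis by (simp add: filterlim_at_top_dense)
qed

lemma (in prob_space) exp_util_accept_Lp_closure_empty_interior:
  assumes "nonatomic M" "\<gamma> > 0" "p \<ge> 1"
  shows "\<not> Lp_nonempty_interior M p (Lp_closure M p (exp_util_accept M \<gamma> \<alpha>))"
proof
  assume "Lp_nonempty_interior M p (Lp_closure M p (exp_util_accept M \<gamma> \<alpha>))"
  then obtain X0 e where X0: "X0 \<in> Lp M p" and e: "e > 0"
    and ball: "\<And>Y. Y \<in> Lp M p \<Longrightarrow> Lp_dist M p X0 Y < e \<Longrightarrow> Y \<in> Lp_closure M p (exp_util_accept M \<gamma> \<alpha>)"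
    unfolding Lp_nonempty_interior_def by blast
  have X0_measurable[measurable]: "X0 \<in> borel_measurable M" using X0 by (simp add: Lp_def)
  obtain R where R: "measure M {x\<in>space M. X0 x \<le> R} > 0"
    using sublevel_set_positive_measure[OF X0_measurable] by blast
  have "eventually (\<lambda>q. 2 * (1 - \<alpha>) * exp (\<gamma> * R) < q * exp (\<gamma> * e / 4 / q powr (1/p)))
      (at_right 0)"
    using assms(2,3) e by (intro eventually_less_mult_exp_div_root) auto
  then obtain \<delta> where \<delta>: "\<delta> > 0" and blowup: "\<And>q. 0 < q \<Longrightarrow> q < \<delta> \<Longrightarrow>
      2 * (1 - \<alpha>) * exp (\<gamma> * R) < q * exp (\<gamma> * e / 4 / q powr (1/p))"
    unfolding eventually_at_right_field by (metis add_0)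
  have "{x\<in>space M. X0 x \<le> R} \<in> sets M" by measurable
  then obtain B where B: "B \<in> sets M" "B \<subseteq> {x\<in>space M. X0 x \<le> R}" "0 < measure M B" "measure M B < \<delta>"
    using nonatomic_small_subset[OF assms(1) _ R \<delta>] by blast
  define t where "t = measure M B powr (1/p)"
  define c where "c = e / (2 * t)"
  have t: "t > 0" and c: "c > 0" using B(3) e by (auto simp: t_def c_def)
  define Y where "Y = (\<lambda>x. X0 x - c * indicator B x)"
  have "(\<lambda>x. c * indicator B x) \<in> Linf M"
    unfolding Linf_def using B(1) c by (auto intro!: exI[of _ c] AE_I2 simp: indicator_def)
  then have Y: "Y \<in> Lp M p"
    unfolding Y_def using Linf_subset_Lp[of p] assms(3) by (intro Lp_diff X0) auto
  have "Lp_dist M p X0 Y = c * t"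
    unfolding Y_def t_def using assms(3) c B(1) by (intro Lp_dist_minus_indicator) auto
  also have "\<dots> < e" using t e by (simp add: c_def)
  finally have "Y \<in> Lp_closure M p (exp_util_accept M \<gamma> \<alpha>)"
    by (rule ball[OF Y])
  moreover
  have "- \<gamma> * (R - c/2) = \<gamma> * e / 4 / t - \<gamma> * R"
    using t by (simp add: c_def field_simps)
  then have "exp (- \<gamma> * (R - c/2)) = exp (\<gamma> * e / 4 / t) / exp (\<gamma> * R)"
    by (simp add: exp_diff)
  then have "2 * (1 - \<alpha>) < exp (- \<gamma> * (R - c/2)) * measure M B"
    using blowup[OF B(3,4)] by (simp add: t_def pos_less_divide_eq mult.commute)
  then have "Y \<notin> Lp_closure M p (exp_util_accept M \<gamma> \<alpha>)"
    using B assms(2,3) c Y by (intro dip_notin_Lp_closure_exp_util_accept) (auto simp: Y_def)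
  ultimately show False by contradiction
qed

theorem corollary6p7:
  fixes M :: "'a measure" and \<gamma> \<alpha> S0 :: real and ST :: "'a \<Rightarrow> real"
  assumes "prob_space M" and "nonatomic M"
    and "\<gamma> > 0" and "\<alpha> < 1"
    and "traded_asset M S0 ST" and "ST \<in> Linf M"
    and "rho_finite M (exp_util_accept M \<gamma> \<alpha>) S0 ST"
  shows "index_fin M (exp_util_accept M \<gamma> \<alpha>) = \<infinity>"
proof -
  have empty: "{p. 1 \<le> p \<and> Lp_nonempty_interior M p (Lp_closure M p (exp_util_accept M \<gamma> \<alpha>))} = {}"
    using prob_space.exp_util_accept_Lp_closure_empty_interior[OF assms(1-3)] by blast
  show ?thesis unfolding index_fin_def empty by (simp add: top_ereal_def)
qed

end
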